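(* Consider nonparametric generalized regression with fixed design: fixed inputs $x^{(1)},\dots,x^{(n)}\in\mathbb{R}^p$, independent responses $y^{(i)}\sim\mathcal{D}_i$, sufficient statistic $t(y)\in\mathbb{R}$, log-partition $\log\mathcal{Z}(\nu)$ with $\mathcal{Z}(\nu)=\int\exp(t(y)\nu)\,dy$. Let $\varphi_1,\dots,\varphi_{q_n}:\mathbb{R}\to\mathbb{R}$ be orthonormal functions and define the $m=q_np$ basis functions $\phi_j(x)=\varphi_k(x_l)$, $k=1,\dots,q_n$, $l=1,\dots,p$, with $|\phi_j(x^{(i)})|\le B$ for all $i,j$. Predictors are $\theta(x)=\sum_{j=1}^m\nu^{(\theta)}_j\phi_j(x)$ with norm $\|\theta\|=\|\nu^{(\theta)}\|_1$. Let $\eta^{(i)}$ be i.i.d. from $\mathcal{Q}$ independent of the responses and $\psi$ unbiased: $\mathbb{E}_\eta[\psi(y,\eta)]=t(y)$. Define $\widehat{\mathcal{L}}_\eta(\theta)=\frac1n\sum_i\big(-\psi(y^{(i)},\eta^{(i)})\theta(x^{(i)})+\log\mathcal{Z}(\theta(x^{(i)}))\big)$, $\widehat{\mathcal{L}}$ the same with $t(y^{(i)})$, $\mathcal{L}_\eta=\mathbb{E}[\widehat{\mathcal{L}}_\eta]$, $\mathcal{L}=\mathbb{E}[\widehat{\mathcal{L}}]$. Then: (i) $\mathcal{L}_\eta(\theta)=\mathcal{L}(\theta)$ for all $\theta$ (so $\varepsilon'_n=0$); (ii) if each $t(y^{(i)})$ is sub-Gaussian with parameter $\sigma_y$ and $\psi(y,\eta)$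 is sub-Gaussian with parameter $\sigma_\eta$ for each fixed $y$, then with $\sigma^2=\sigma_y^2+\sigma_\eta^2$, with probability at least $1-\delta$, for all $\theta$, $$|\widehat{\mathcal{L}}_\eta(\theta)-\mathcal{L}_\eta(\theta)|\le\sigma B\sqrt{\tfrac2n\big(\log p+\log q_n+\log\tfrac2\delta\big)}\ \|\theta\|;$$ in particular, with $q_n=\exp(n^{2\beta})$, $\beta\in(0,1/2)$, the rate is $O\big(\sigma n^{\beta-1/2}\sqrt{\log(1/\delta)}\big)$ (for fixed $p$, $B$); (iii) if instead $\mathrm{Var}(t(y^{(i)}))\le\sigma_y^2$ and $\mathrm{Var}_\eta(\psi(y,\eta))\le\sigma_\eta^2$ for each fixed $y$, then with $\sigma^2=\sigma_y^2+\sigma_\eta^2$, with probability at least $1-\delta$, for all $\theta$, $|\widehat{\mathcal{L}}_\eta(\theta)-\mathcal{L}_\eta(\theta)|\le\sigma B\sqrt{\tfrac{q_np}{n\delta}}\,\|\theta\|$; in particular with $q_n=n^{2\beta}$, $\beta\in(0,1/2)$, the rate is $O\big(\sigma n^{\beta-1/2}\sqrt{1/\delta}\big)$.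
   Context: A real random variable $Y$ is sub-Gaussian with parameter $s$ if $\mathbb{E}[\exp(\lambda(Y-\mathbb{E}Y))]\le\exp(s^2\lambda^2/2)$ for all $\lambda\in\mathbb{R}$. *)

theory Defs
  imports "HOL-Probability.Probability"
begin

definition subgaussian :: "'a measure \<Rightarrow> ('a \<Rightarrow> real) \<Rightarrow> real \<Rightarrow> bool" where
  "subgaussian M Y s \<longleftrightarrow> integrable M Y \<and>
     (\<forall>l::real. integrable M (\<lambda>\<omega>. exp (l * (Y \<omega> - (\<integral>w. Y w \<partial>M)))) \<and>
        (\<integral>\<omega>. exp (l * (Y \<omega> - (\<integral>w. Y w \<partial>M))) \<partial>M) \<le> exp (s\<^sup>2 * l\<^sup>2 / 2))"

definition variance_le :: "'a measure \<Rightarrow> ('a \<Rightarrow> real) \<Rightarrow> real \<Rightarrow> bool" where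
  "variance_le M Y s \<longleftrightarrow> integrable M Y \<and> integrable M (\<lambda>\<omega>. (Y \<omega>)\<^sup>2) \<and>
     (\<integral>\<omega>. (Y \<omega> - (\<integral>w. Y w \<partial>M))\<^sup>2 \<partial>M) \<le> s\<^sup>2"

definition orthonormal_funs :: "(nat \<Rightarrow> real \<Rightarrow> real) \<Rightarrow> nat \<Rightarrow> bool" where
  "orthonormal_funs \<phi> q \<longleftrightarrow> (\<forall>k<q. \<forall>l<q.
     integrable lborel (\<lambda>x. \<phi> k x * \<phi> l x) \<and>
     (\<integral>x. \<phi> k x * \<phi> l x \<partial>lborel) = (if k = l then 1 else 0))"

text \<open>Basis function phi_(k,l)(x) = varphi_k(x_l); a point of R^p is x :: nat => real
  (coordinates 0..p-1 used).  Coefficients nu are indexed by (k,l), k<q, l<p (m = q p).\<close>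
definition basis_fun :: "(nat \<Rightarrow> real \<Rightarrow> real) \<Rightarrow> nat \<times> nat \<Rightarrow> (nat \<Rightarrow> real) \<Rightarrow> real" where
  "basis_fun \<phi> j x = \<phi> (fst j) (x (snd j))"

definition predictor :: "(nat \<Rightarrow> real \<Rightarrow> real) \<Rightarrow> nat \<Rightarrow> nat \<Rightarrow> (nat \<times> nat \<Rightarrow> real)
    \<Rightarrow> (nat \<Rightarrow> real) \<Rightarrow> real" where
  "predictor \<phi> q p \<nu> x = (\<Sum>j\<in>{..<q} \<times> {..<p}. \<nu> j * basis_fun \<phi> j x)"

definition pred_norm :: "nat \<Rightarrow> nat \<Rightarrow> (nat \<times> nat \<Rightarrow> real) \<Rightarrow> real" where
  "pred_norm q p \<nu> = (\<Sum>j\<in>{..<q} \<times> {..<p}. \<bar>\<nu> j\<bar>)"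

definition logZ :: "(real \<Rightarrow> real) \<Rightarrow> real \<Rightarrow> real" where
  "logZ t v = ln (\<integral>y. exp (t y * v) \<partial>lborel)"

definition Lhat_eta :: "(real \<Rightarrow> real) \<Rightarrow> (real \<Rightarrow> 'e \<Rightarrow> real) \<Rightarrow> (nat \<Rightarrow> real \<Rightarrow> real)
    \<Rightarrow> nat \<Rightarrow> nat \<Rightarrow> nat \<Rightarrow> (nat \<Rightarrow> nat \<Rightarrow> real) \<Rightarrow> (nat \<Rightarrow> 'a \<Rightarrow> real) \<Rightarrow> (nat \<Rightarrow> 'a \<Rightarrow> 'e)
    \<Rightarrow> (nat \<times> nat \<Rightarrow> real) \<Rightarrow> 'a \<Rightarrow> real" where
  "Lhat_eta t \<psi> \<phi> q p n x Y Eta \<nu> \<omega> = (1 / real n) * (\<Sum>i<n.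
      - \<psi> (Y i \<omega>) (Eta i \<omega>) * predictor \<phi> q p \<nu> (x i) + logZ t (predictor \<phi> q p \<nu> (x i)))"

definition Lhat :: "(real \<Rightarrow> real) \<Rightarrow> (nat \<Rightarrow> real \<Rightarrow> real)
    \<Rightarrow> nat \<Rightarrow> nat \<Rightarrow> nat \<Rightarrow> (nat \<Rightarrow> nat \<Rightarrow> real) \<Rightarrow> (nat \<Rightarrow> 'a \<Rightarrow> real)
    \<Rightarrow> (nat \<times> nat \<Rightarrow> real) \<Rightarrow> 'a \<Rightarrow> real" where
  "Lhat t \<phi> q p n x Y \<nu> \<omega> = (1 / real n) * (\<Sum>i<n.
      - t (Y i \<omega>) * predictor \<phi> q p \<nu> (x i) + logZ t (predictor \<phi> q p \<nu> (x i)))"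

end

theory Submission
  imports Defs
begin

text \<open>Let \<open>W\<^sub>i = \<psi>(y\<^sub>i, \<eta>\<^sub>i) - E t(y\<^sub>i)\<close>.  Integrating out \<open>\<eta>\<^sub>i\<close> first and using unbiasedness
  of \<open>\<psi>\<close> gives \<open>E W\<^sub>i = 0\<close>, hence (i); moreover the deviation of the empirical loss is linear in
  the coefficients, \<open>L\<^sub>\<eta>(\<theta>) - E L\<^sub>\<eta>(\<theta>) = \<Sum>\<^sub>j \<nu>\<^sub>j Z\<^sub>j\<close> with \<open>Z\<^sub>j = -(1/n) \<Sum>\<^sub>i \<phi>\<^sub>j(x\<^sub>i) W\<^sub>i\<close>.
  Since the dual of the \<open>\<ell>\<^sub>1\<close>-norm is the \<open>\<ell>\<^sub>\<infinity>\<close>-norm, the bound uniform in \<open>\<theta>\<close> holds exactly when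
  \<open>max\<^sub>j |Z\<^sub>j| \<le> s\<close>, and a union bound over the \<open>q p\<close> coordinates leaves a tail bound for one
  \<open>Z\<^sub>j\<close>.  Each \<open>W\<^sub>i\<close> is sub-Gaussian (resp. has variance at most) \<open>\<sigma>\<^sup>2 = \<sigma>\<^sub>y\<^sup>2 + \<sigma>\<^sub>\<eta>\<^sup>2\<close>, so by
  independence and \<open>|\<phi>\<^sub>j| \<le> B\<close> the variable \<open>Z\<^sub>j\<close> has variance proxy \<open>\<sigma>\<^sup>2 B\<^sup>2 / n\<close>, and the
  Chernoff (resp. Chebyshev) inequality finishes the proof.\<close>

section \<open>Gaussian moment bounds and tail estimates\<close>

definition mgf_le_gaussian :: "'a measure \<Rightarrow> ('a \<Rightarrow> real) \<Rightarrow> real \<Rightarrow> bool" where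
  "mgf_le_gaussian M Z v \<longleftrightarrow>
     (\<forall>l. integrable M (\<lambda>\<omega>. exp (l * Z \<omega>)) \<and> (\<integral>\<omega>. exp (l * Z \<omega>) \<partial>M) \<le> exp (v * l\<^sup>2 / 2))"

lemma mgf_le_gaussian_uminus:
  assumes "mgf_le_gaussian M Z v"
  shows "mgf_le_gaussian M (\<lambda>\<omega>. - Z \<omega>) v"
  unfolding mgf_le_gaussian_def
proof
  fix l :: real
  show "integrable M (\<lambda>\<omega>. exp (l * - Z \<omega>)) \<and> (\<integral>\<omega>. exp (l * - Z \<omega>) \<partial>M) \<le> exp (v * l\<^sup>2 / 2)"
    using assms[unfolded mgf_le_gaussian_def, rule_format, of "- l"] by simp
qed

lemma Int_stable_vimage_sets: "Int_stable {f -` A \<inter> S | A. A \<in> sets N}"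
  unfolding Int_stable_def
  by (auto, rule_tac x="A \<inter> Aa" in exI, auto)

lemma (in finite_measure) integrable_square_diff_const:
  fixes f :: "'a \<Rightarrow> real"
  assumes "integrable M f" "integrable M (\<lambda>x. (f x)\<^sup>2)"
  shows "integrable M (\<lambda>x. (f x - c)\<^sup>2)"
proof -
  have "(\<lambda>x. (f x - c)\<^sup>2) = (\<lambda>x. (f x)\<^sup>2 - 2 * c * f x + c\<^sup>2)"
    by (auto simp: power2_diff)
  then show ?thesis
    using assms by simp
qed

lemma abs_sum_mult_le_l1_iff:
  fixes z :: "'j \<Rightarrow> real"
  assumes "finite J"
  shows "(\<forall>\<nu>. \<bar>\<Sum>j\<in>J. \<nu> j * z j\<bar> \<le> s * (\<Sum>j\<in>J. \<bar>\<nu> j\<bar>)) \<longleftrightarrow> (\<forall>j\<in>J. \<bar>z j\<bar> \<le> s)"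
proof
  assume le: "\<forall>\<nu>. \<bar>\<Sum>j\<in>J. \<nu> j * z j\<bar> \<le> s * (\<Sum>j\<in>J. \<bar>\<nu> j\<bar>)"
  show "\<forall>j\<in>J. \<bar>z j\<bar> \<le> s"
  proof
    fix j assume j: "j \<in> J"
    have "(\<Sum>k\<in>J. (if k = j then 1 else 0) * z k) = (\<Sum>k\<in>J. if k = j then z k else 0)"
      by (rule sum.cong) auto
    moreover have "(\<Sum>k\<in>J. \<bar>if k = j then 1 else 0 :: real\<bar>) = 1"
      using assms j by (simp add: if_distrib sum.delta cong: if_cong)
    ultimately show "\<bar>z j\<bar> \<le> s"
      using le[rule_format, of "\<lambda>k. if k = j then 1 else 0"] assms j by simp
  qed
next
  assume le: "\<forall>j\<in>J. \<bar>z j\<bar> \<le> s"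
  show "\<forall>\<nu>. \<bar>\<Sum>j\<in>J. \<nu> j * z j\<bar> \<le> s * (\<Sum>j\<in>J. \<bar>\<nu> j\<bar>)"
  proof
    fix \<nu> :: "'j \<Rightarrow> real"
    have "\<bar>\<Sum>j\<in>J. \<nu> j * z j\<bar> \<le> (\<Sum>j\<in>J. \<bar>\<nu> j\<bar> * s)"
      by (rule order_trans[OF sum_abs sum_mono]) (use le in \<open>auto simp: abs_mult intro: mult_left_mono\<close>)
    then show "\<bar>\<Sum>j\<in>J. \<nu> j * z j\<bar> \<le> s * (\<Sum>j\<in>J. \<bar>\<nu> j\<bar>)"
      by (simp add: sum_distrib_left mult.commute)
  qed
qed

context prob_space
begin

lemma integral_scaled_affine_sum:
  fixes g :: "nat \<Rightarrow> 'a \<Rightarrow> real"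
  assumes "\<And>i. i < n \<Longrightarrow> integrable M (g i)"
  shows "(\<integral>\<omega>. c * (\<Sum>i<n. - g i \<omega> * P i + C i) \<partial>M) = c * (\<Sum>i<n. - (\<integral>\<omega>. g i \<omega> \<partial>M) * P i + C i)"
proof -
  have "(\<integral>\<omega>. (\<Sum>i<n. - g i \<omega> * P i + C i) \<partial>M) = (\<Sum>i<n. \<integral>\<omega>. - g i \<omega> * P i + C i \<partial>M)"
    by (rule Bochner_Integration.integral_sum) (use assms in auto)
  also have "\<dots> = (\<Sum>i<n. - (\<integral>\<omega>. g i \<omega> \<partial>M) * P i + C i)"
    by (rule sum.cong) (use assms in \<open>auto simp: prob_space\<close>)
  finally show ?thesis by simp
qed

lemma mgf_le_gaussian_weighted_sum:
  fixes W :: "'i \<Rightarrow> 'a \<Rightarrow> real"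
  assumes fin: "finite I" and ind: "indep_vars (\<lambda>_. borel) W I"
    and mgf: "\<And>i. i \<in> I \<Longrightarrow> mgf_le_gaussian M (W i) v"
    and v: "v \<ge> 0" and a: "\<And>i. i \<in> I \<Longrightarrow> \<bar>a i\<bar> \<le> c"
  shows "mgf_le_gaussian M (\<lambda>\<omega>. \<Sum>i\<in>I. a i * W i \<omega>) (v * c\<^sup>2 * real (card I))"
  unfolding mgf_le_gaussian_def
proof
  fix l
  let ?X = "\<lambda>i \<omega>. exp ((l * a i) * W i \<omega>)"
  have eq: "(\<lambda>\<omega>. exp (l * (\<Sum>i\<in>I. a i * W i \<omega>))) = (\<lambda>\<omega>. \<Prod>i\<in>I. ?X i \<omega>)"
    by (auto simp: sum_distrib_left exp_sum[OF fin] mult.assoc)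
  have indX: "indep_vars (\<lambda>_. borel) ?X I"
    by (rule indep_vars_compose2[OF ind]) auto
  have intX: "\<And>i. i \<in> I \<Longrightarrow> integrable M (?X i)"
    using mgf by (auto simp: mgf_le_gaussian_def)
  have "(\<integral>\<omega>. (\<Prod>i\<in>I. ?X i \<omega>) \<partial>M) = (\<Prod>i\<in>I. \<integral>\<omega>. ?X i \<omega> \<partial>M)"
    by (rule indep_vars_lebesgue_integral[OF fin indX intX])
  also have "\<dots> \<le> (\<Prod>i\<in>I. exp (v * c\<^sup>2 * l\<^sup>2 / 2))"
  proof (intro prod_mono conjI integral_nonneg_AE)
    fix i assume i: "i \<in> I"
    have "(a i)\<^sup>2 \<le> c\<^sup>2"
      using power_mono[OF a[OF i] abs_ge_zero, of 2] by simp
    then have "(l * a i)\<^sup>2 \<le> c\<^sup>2 * l\<^sup>2"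
      using mult_right_mono[of "(a i)\<^sup>2" "c\<^sup>2" "l\<^sup>2"] by (simp add: power_mult_distrib mult.commute)
    then have "v * (l * a i)\<^sup>2 / 2 \<le> v * c\<^sup>2 * l\<^sup>2 / 2"
      using mult_left_mono[OF _ v] by (simp add: mult.assoc)
    then show "(\<integral>\<omega>. ?X i \<omega> \<partial>M) \<le> exp (v * c\<^sup>2 * l\<^sup>2 / 2)"
      using mgf[OF i] unfolding mgf_le_gaussian_def by (meson exp_le_cancel_iff order_trans)
  qed auto
  also have "\<dots> = exp (v * c\<^sup>2 * real (card I) * l\<^sup>2 / 2)"
    by (simp add: exp_of_nat_mult[symmetric] mult_ac)
  finally show "integrable M (\<lambda>\<omega>. exp (l * (\<Sum>i\<in>I. a i * W i \<omega>))) \<and>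
      (\<integral>\<omega>. exp (l * (\<Sum>i\<in>I. a i * W i \<omega>)) \<partial>M) \<le> exp (v * c\<^sup>2 * real (card I) * l\<^sup>2 / 2)"
    using indep_vars_integrable[OF fin indX intX] eq by simp
qed

lemma prob_ge_le_if_mgf_le_gaussian:
  assumes "Z \<in> borel_measurable M" and mgf: "mgf_le_gaussian M Z v" and "v > 0" "s > 0"
  shows "prob {\<omega> \<in> space M. Z \<omega> \<ge> s} \<le> exp (- s\<^sup>2 / (2 * v))"
proof -
  define l where "l = s / v"
  have l: "l > 0" using assms by (simp add: l_def)
  have "{\<omega> \<in> space M. Z \<omega> \<ge> s} = {\<omega> \<in> space M. exp (l * Z \<omega>) \<ge> exp (l * s)}"
    using l by auto
  also have "prob \<dots> \<le> (\<integral>\<omega>. exp (l * Z \<omega>) \<partial>M) / exp (l * s)"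
    by (rule integral_Markov_inequality_measure) (use assms in \<open>auto simp: mgf_le_gaussian_def\<close>)
  also have "\<dots> \<le> exp (v * l\<^sup>2 / 2) / exp (l * s)"
    using mgf by (intro divide_right_mono) (auto simp: mgf_le_gaussian_def)
  also have "\<dots> = exp (- s\<^sup>2 / (2 * v))"
    using assms by (simp add: l_def exp_diff[symmetric] power2_eq_square field_simps)
  finally show ?thesis .
qed

lemma prob_abs_gt_le_if_mgf_le_gaussian:
  assumes [measurable]: "Z \<in> borel_measurable M"
    and mgf: "mgf_le_gaussian M Z v" and "v > 0" "s > 0"
  shows "prob {\<omega> \<in> space M. \<bar>Z \<omega>\<bar> > s} \<le> 2 * exp (- s\<^sup>2 / (2 * v))"
proof -
  have "prob {\<omega> \<in> space M. \<bar>Z \<omega>\<bar> > s}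
      \<le> prob ({\<omega> \<in> space M. Z \<omega> \<ge> s} \<union> {\<omega> \<in> space M. - Z \<omega> \<ge> s})"
    by (intro finite_measure_mono) auto
  also have "\<dots> \<le> prob {\<omega> \<in> space M. Z \<omega> \<ge> s} + prob {\<omega> \<in> space M. - Z \<omega> \<ge> s}"
    by (rule measure_Un_le) auto
  also have "\<dots> \<le> 2 * exp (- s\<^sup>2 / (2 * v))"
    using prob_ge_le_if_mgf_le_gaussian[OF _ mgf] prob_ge_le_if_mgf_le_gaussian[OF _ mgf_le_gaussian_uminus[OF mgf]]
      assms by fastforce
  finally show ?thesis .
qed

lemma AE_eq_0_if_mgf_le_gaussian_0:
  assumes mgf: "mgf_le_gaussian M Z 0"
  shows "AE \<omega> in M. Z \<omega> = 0"
proof -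
  let ?u = "\<lambda>\<omega>. exp (1 * Z \<omega>) + exp ((-1) * Z \<omega>) - 2"
  have u_sq: "?u \<omega> = (exp (Z \<omega> / 2) - exp (- Z \<omega> / 2))\<^sup>2" for \<omega>
    by (simp add: power2_diff exp_minus field_simps power2_eq_square exp_add[symmetric])
  have int: "integrable M ?u" and le: "integral\<^sup>L M ?u \<le> 0"
    using mgf[unfolded mgf_le_gaussian_def, rule_format, of 1] mgf[unfolded mgf_le_gaussian_def, rule_format, of "-1"]
    by (auto simp: prob_space)
  have nn: "AE \<omega> in M. 0 \<le> ?u \<omega>" unfolding u_sq by auto
  then have "integral\<^sup>L M ?u = 0"
    using le integral_nonneg_AE[OF nn] by linarith
  then have "AE \<omega> in M. ?u \<omega> = 0"
    using integral_nonneg_eq_0_iff_AE[OF int nn] by simp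
  then show ?thesis
  proof (rule AE_mp, intro AE_I2 impI)
    fix \<omega> assume "?u \<omega> = 0"
    then have "exp (Z \<omega> / 2) = exp (- Z \<omega> / 2)" unfolding u_sq by simp
    then show "Z \<omega> = 0" by simp
  qed
qed

lemma AE_eq_0_if_second_moment_le_0:
  fixes Z :: "'a \<Rightarrow> real"
  assumes int: "integrable M (\<lambda>\<omega>. (Z \<omega>)\<^sup>2)" and le: "(\<integral>\<omega>. (Z \<omega>)\<^sup>2 \<partial>M) \<le> 0"
  shows "AE \<omega> in M. Z \<omega> = 0"
proof -
  have "(\<integral>\<omega>. (Z \<omega>)\<^sup>2 \<partial>M) = 0"
    using le integral_nonneg_AE[of "\<lambda>\<omega>. (Z \<omega>)\<^sup>2" M] by (simp add: antisym)
  then have "AE \<omega> in M. (Z \<omega>)\<^sup>2 = 0"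
    using integral_nonneg_eq_0_iff_AE[OF int] by simp
  then show ?thesis by auto
qed

lemma prob_abs_gt_eq_0_if_AE_eq_0:
  fixes Z :: "'a \<Rightarrow> real"
  assumes [measurable]: "Z \<in> borel_measurable M"
    and ae: "AE \<omega> in M. Z \<omega> = 0" and "s \<ge> 0"
  shows "prob {\<omega> \<in> space M. \<bar>Z \<omega>\<bar> > s} = 0"
proof -
  have "AE \<omega> in M. \<not> \<bar>Z \<omega>\<bar> > s"
    using ae by (rule AE_mp) (use \<open>s \<ge> 0\<close> in auto)
  then show ?thesis
    by (subst (asm) AE_iff_measurable[of "{\<omega> \<in> space M. \<bar>Z \<omega>\<bar> > s}"]) (auto simp: measure_def)
qed

lemma second_moment_weighted_sum_indep:
  fixes W :: "'i \<Rightarrow> 'a \<Rightarrow> real"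
  assumes fin: "finite I" and ind: "indep_vars (\<lambda>_. borel) W I"
    and sq: "\<And>i. i \<in> I \<Longrightarrow> integrable M (\<lambda>\<omega>. (W i \<omega>)\<^sup>2)"
    and mean: "\<And>i. i \<in> I \<Longrightarrow> expectation (W i) = 0"
  shows "integrable M (\<lambda>\<omega>. (\<Sum>i\<in>I. a i * W i \<omega>)\<^sup>2)"
    and "(\<integral>\<omega>. (\<Sum>i\<in>I. a i * W i \<omega>)\<^sup>2 \<partial>M) = (\<Sum>i\<in>I. (a i)\<^sup>2 * (\<integral>\<omega>. (W i \<omega>)\<^sup>2 \<partial>M))"
proof -
  have int: "integrable M (W i)" if "i \<in> I" for i
  proof (rule square_integrable_imp_integrable)
    show "W i \<in> borel_measurable M" using ind that by (simp add: indep_vars_def)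
  qed (rule sq[OF that])
  have prod: "integrable M (\<lambda>\<omega>. W i \<omega> * W k \<omega>) \<and>
      (\<integral>\<omega>. W i \<omega> * W k \<omega> \<partial>M) = (if i = k then \<integral>\<omega>. (W i \<omega>)\<^sup>2 \<partial>M else 0)"
    if "i \<in> I" "k \<in> I" for i k
  proof (cases "i = k")
    case True
    then show ?thesis using sq[OF that(1)] by (simp add: power2_eq_square)
  next
    case False
    have indik: "indep_vars (\<lambda>_. borel) W {i, k}"
      by (rule indep_vars_subset[OF ind]) (use that in auto)
    have intik: "\<And>m. m \<in> {i, k} \<Longrightarrow> integrable M (W m)" using int that by auto
    have "(\<lambda>\<omega>. \<Prod>m\<in>{i, k}. W m \<omega>) = (\<lambda>\<omega>. W i \<omega> * W k \<omega>)" using False by auto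
    then show ?thesis
      using indep_vars_integrable[OF _ indik intik] indep_vars_lebesgue_integral[OF _ indik intik]
        False mean[OF that(1)] by simp
  qed
  have sq_eq: "(\<lambda>\<omega>. (\<Sum>i\<in>I. a i * W i \<omega>)\<^sup>2) = (\<lambda>\<omega>. \<Sum>i\<in>I. \<Sum>k\<in>I. (a i * a k) * (W i \<omega> * W k \<omega>))"
    by (auto simp: power2_eq_square sum_product algebra_simps)
  show "integrable M (\<lambda>\<omega>. (\<Sum>i\<in>I. a i * W i \<omega>)\<^sup>2)"
    unfolding sq_eq using prod by (intro Bochner_Integration.integrable_sum integrable_mult_right) auto
  have int_ik: "integrable M (\<lambda>\<omega>. (a i * a k) * (W i \<omega> * W k \<omega>))" if "i \<in> I" "k \<in> I" for i k
    using prod[OF that] by simp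
  have "(\<integral>\<omega>. (\<Sum>i\<in>I. a i * W i \<omega>)\<^sup>2 \<partial>M)
      = (\<Sum>i\<in>I. \<integral>\<omega>. (\<Sum>k\<in>I. (a i * a k) * (W i \<omega> * W k \<omega>)) \<partial>M)"
    unfolding sq_eq by (rule Bochner_Integration.integral_sum) (use int_ik in auto)
  also have "\<dots> = (\<Sum>i\<in>I. \<Sum>k\<in>I. (a i * a k) * (\<integral>\<omega>. W i \<omega> * W k \<omega> \<partial>M))"
    by (rule sum.cong[OF refl], subst Bochner_Integration.integral_sum) (use int_ik in auto)
  also have "\<dots> = (\<Sum>i\<in>I. (a i)\<^sup>2 * (\<integral>\<omega>. (W i \<omega>)\<^sup>2 \<partial>M))"
  proof (rule sum.cong[OF refl])
    fix i assume i: "i \<in> I"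
    have "(\<Sum>k\<in>I. (a i * a k) * (\<integral>\<omega>. W i \<omega> * W k \<omega> \<partial>M))
        = (\<Sum>k\<in>I. if k = i then (a i)\<^sup>2 * (\<integral>\<omega>. (W i \<omega>)\<^sup>2 \<partial>M) else 0)"
      by (rule sum.cong[OF refl]) (use prod[OF i] in \<open>auto simp: power2_eq_square\<close>)
    also have "\<dots> = (a i)\<^sup>2 * (\<integral>\<omega>. (W i \<omega>)\<^sup>2 \<partial>M)"
      using fin i by simp
    finally show "(\<Sum>k\<in>I. (a i * a k) * (\<integral>\<omega>. W i \<omega> * W k \<omega> \<partial>M)) = (a i)\<^sup>2 * (\<integral>\<omega>. (W i \<omega>)\<^sup>2 \<partial>M)" .
  qed
  finally show "(\<integral>\<omega>. (\<Sum>i\<in>I. a i * W i \<omega>)\<^sup>2 \<partial>M) = (\<Sum>i\<in>I. (a i)\<^sup>2 * (\<integral>\<omega>. (W i \<omega>)\<^sup>2 \<partial>M))" .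
qed

lemma prob_all_abs_le_ge_union_bound:
  fixes Z :: "'j \<Rightarrow> 'a \<Rightarrow> real"
  assumes J: "finite J" "J \<noteq> {}" and Zm: "\<And>j. j \<in> J \<Longrightarrow> Z j \<in> borel_measurable M"
    and tail: "\<And>j. j \<in> J \<Longrightarrow> prob {\<omega> \<in> space M. \<bar>Z j \<omega>\<bar> > s} \<le> \<delta> / real (card J)"
  shows "prob {\<omega> \<in> space M. \<forall>j\<in>J. \<bar>Z j \<omega>\<bar> \<le> s} \<ge> 1 - \<delta>"
proof -
  let ?A = "\<lambda>j. {\<omega> \<in> space M. \<bar>Z j \<omega>\<bar> > s}"
  have ev: "?A j \<in> events" if "j \<in> J" for j using Zm[OF that] by measurable
  have "prob (\<Union>j\<in>J. ?A j) \<le> (\<Sum>j\<in>J. prob (?A j))"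
    by (rule finite_measure_subadditive_finite) (use J ev in auto)
  also have "\<dots> \<le> (\<Sum>j\<in>J. \<delta> / real (card J))"
    by (rule sum_mono) (rule tail)
  also have "\<dots> = \<delta>"
    using J by simp
  finally have "prob (\<Union>j\<in>J. ?A j) \<le> \<delta>" .
  moreover have "{\<omega> \<in> space M. \<forall>j\<in>J. \<bar>Z j \<omega>\<bar> \<le> s} = space M - (\<Union>j\<in>J. ?A j)"
    by auto
  moreover have "prob (space M - (\<Union>j\<in>J. ?A j)) = 1 - prob (\<Union>j\<in>J. ?A j)"
    by (rule prob_compl) (use J ev in auto)
  ultimately show ?thesis by simp
qed

end

section \<open>Responses with independent unbiased noise\<close>

locale noisy_responses = prob_space M
  for M :: "'a measure" and N :: "'e measure" and Q :: "'e measure" and n :: nat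
    and Y :: "nat \<Rightarrow> 'a \<Rightarrow> real" and Eta :: "nat \<Rightarrow> 'a \<Rightarrow> 'e"
    and t :: "real \<Rightarrow> real" and \<psi> :: "real \<Rightarrow> 'e \<Rightarrow> real" +
  assumes n: "n > 0"
    and Y_meas[measurable]: "\<And>i. i < n \<Longrightarrow> Y i \<in> borel_measurable M"
    and Eta_meas[measurable]: "\<And>i. i < n \<Longrightarrow> Eta i \<in> measurable M N"
    and t_meas: "t \<in> borel_measurable borel"
    and psi_meas: "(\<lambda>(y, e). \<psi> y e) \<in> borel_measurable (borel \<Otimes>\<^sub>M N)"
    and indep: "indep_sets
          (\<lambda>k. case k of
              Inl i \<Rightarrow> {Y i -` A \<inter> space M | A. A \<in> sets borel}
            | Inr i \<Rightarrow> {Eta i -` A \<inter> space M | A. A \<in> sets N})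
          ({..<n} <+> {..<n})"
    and Eta_distr: "\<And>i. i < n \<Longrightarrow> distr M N (Eta i) = Q"
    and unbiased: "\<And>y. integrable Q (\<psi> y) \<and> (\<integral>e. \<psi> y e \<partial>Q) = t y"
    and psi_int: "\<And>i. i < n \<Longrightarrow> integrable M (\<lambda>\<omega>. \<psi> (Y i \<omega>) (Eta i \<omega>))"
begin

lemma t_comp_meas[measurable]: "f \<in> borel_measurable K \<Longrightarrow> (\<lambda>x. t (f x)) \<in> borel_measurable K"
  using measurable_compose[OF _ t_meas] by blast

lemma psi_comp_meas[measurable]:
  "f \<in> borel_measurable K \<Longrightarrow> g \<in> measurable K N \<Longrightarrow> (\<lambda>x. \<psi> (f x) (g x)) \<in> borel_measurable K"
  using measurable_compose[OF measurable_Pair psi_meas] by simp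

lemma sets_Q[measurable_cong]: "sets Q = sets N"
  using Eta_distr[OF n] by auto

lemma prob_space_Q: "prob_space Q"
  using Eta_distr[OF n] prob_space_distr[OF Eta_meas[OF n]] by simp

lemma measurable_Y_Eta: "i < n \<Longrightarrow> (\<lambda>\<omega>. (Y i \<omega>, Eta i \<omega>)) \<in> measurable M (borel \<Otimes>\<^sub>M N)"
  by measurable

definition response_events :: "nat + nat \<Rightarrow> 'a set set" where
  "response_events k = (case k of
      Inl i \<Rightarrow> {Y i -` A \<inter> space M | A. A \<in> sets borel}
    | Inr i \<Rightarrow> {Eta i -` A \<inter> space M | A. A \<in> sets N})"

definition pair_events :: "nat \<Rightarrow> 'a set set" where
  "pair_events i = sigma_sets (space M) (response_events (Inl i) \<union> response_events (Inr i))"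

lemma response_events_subset: "response_events k \<subseteq> Pow (space M)"
  unfolding response_events_def by (cases k) auto

lemma indep_sets_pair_events: "indep_sets pair_events {..<n}"
proof -
  have "indep_sets (\<lambda>i. sigma_sets (space M) (\<Union>k\<in>{Inl i, Inr i}. response_events k)) {..<n}"
  proof (rule indep_sets_collect_sigma)
    have "(\<Union>i\<in>{..<n}. {Inl i, Inr i}) = {..<n} <+> {..<n}" by auto
    then show "indep_sets response_events (\<Union>i\<in>{..<n}. {Inl i, Inr i})"
      using indep unfolding response_events_def by simp
    show "Int_stable (response_events k)" for k
      unfolding response_events_def by (cases k) (auto intro: Int_stable_vimage_sets)
    show "disjoint_family_on (\<lambda>i. {Inl i, Inr i}) {..<n}"
      unfolding disjoint_family_on_def by auto
  qed
  then show ?thesis unfolding pair_events_def by simp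
qed

lemma vimage_pair_in_pair_events:
  assumes i: "i < n" and g: "(\<lambda>(y, e). g y e) \<in> borel_measurable (borel \<Otimes>\<^sub>M N)"
    and A: "A \<in> sets borel"
  shows "(\<lambda>\<omega>. g (Y i \<omega>) (Eta i \<omega>)) -` A \<inter> space M \<in> pair_events i"
proof -
  let ?G = "response_events (Inl i) \<union> response_events (Inr i)"
  let ?S = "sigma (space M) ?G"
  have sub: "?G \<subseteq> Pow (space M)" using response_events_subset by blast
  have S: "space ?S = space M" "sets ?S = pair_events i"
    using sub unfolding pair_events_def by simp_all
  have "Y i \<in> borel_measurable ?S"
  proof (rule measurableI)
    fix A :: "real set" assume "A \<in> sets borel"
    then have "Y i -` A \<inter> space M \<in> response_events (Inl i)" unfolding response_events_def by auto
    then show "Y i -` A \<inter> space ?S \<in> sets ?S"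
      unfolding S pair_events_def by auto
  qed auto
  moreover have "Eta i \<in> measurable ?S N"
  proof (rule measurableI)
    show "x \<in> space ?S \<Longrightarrow> Eta i x \<in> space N" for x
      using measurable_space[OF Eta_meas[OF i]] S by auto
  next
    fix A assume "A \<in> sets N"
    then have "Eta i -` A \<inter> space M \<in> response_events (Inr i)" unfolding response_events_def by auto
    then show "Eta i -` A \<inter> space ?S \<in> sets ?S"
      unfolding S pair_events_def by auto
  qed
  ultimately have "(\<lambda>\<omega>. (Y i \<omega>, Eta i \<omega>)) \<in> measurable ?S (borel \<Otimes>\<^sub>M N)"
    by (rule measurable_Pair)
  from measurable_sets[OF measurable_compose[OF this g] A] show ?thesis
    unfolding S by simp
qed

lemma indep_vars_pairs:
  assumes g: "(\<lambda>(y, e). g y e) \<in> borel_measurable (borel \<Otimes>\<^sub>M N)"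
  shows "indep_vars (\<lambda>_. borel) (\<lambda>i \<omega>. g (Y i \<omega>) (Eta i \<omega>)) {..<n}"
  unfolding indep_vars_def
proof
  show "\<forall>i\<in>{..<n}. random_variable borel (\<lambda>\<omega>. g (Y i \<omega>) (Eta i \<omega>))"
    using measurable_compose[OF measurable_Y_Eta g] by simp
  show "indep_sets (\<lambda>i. sigma_sets (space M)
      {(\<lambda>\<omega>. g (Y i \<omega>) (Eta i \<omega>)) -` A \<inter> space M |A. A \<in> sets borel}) {..<n}"
  proof (rule indep_sets_mono_sets[OF indep_sets_pair_events])
    fix i assume "i \<in> {..<n}"
    then have i: "i < n" by simp
    have sa: "sigma_algebra (space M) (pair_events i)"
      unfolding pair_events_def using response_events_subset by (intro sigma_algebra_sigma_sets) blast
    have "{(\<lambda>\<omega>. g (Y i \<omega>) (Eta i \<omega>)) -` A \<inter> space M |A. A \<in> sets borel} \<subseteq> pair_events i"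
      using vimage_pair_in_pair_events[OF i g] by auto
    then show "sigma_sets (space M) {(\<lambda>\<omega>. g (Y i \<omega>) (Eta i \<omega>)) -` A \<inter> space M |A. A \<in> sets borel}
        \<subseteq> pair_events i"
      using sigma_algebra.sigma_sets_subset[OF sa] by blast
  qed
qed

lemma prob_vimage_Y_Int_vimage_Eta:
  assumes i: "i < n" and A: "A \<in> sets borel" and B: "B \<in> sets N"
  shows "prob (Y i -` A \<inter> space M \<inter> (Eta i -` B \<inter> space M))
    = prob (Y i -` A \<inter> space M) * prob (Eta i -` B \<inter> space M)"
proof -
  let ?a = "Y i -` A \<inter> space M" and ?b = "Eta i -` B \<inter> space M"
  have "indep_sets response_events {Inl i, Inr i}"
    by (rule indep_sets_mono_index[OF _ indep[folded response_events_def]]) (use i in auto)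
  then have "prob (\<Inter>k\<in>{Inl i, Inr i}. (\<lambda>k. if k = Inl i then ?a else ?b) k)
      = (\<Prod>k\<in>{Inl i, Inr i}. prob ((\<lambda>k. if k = Inl i then ?a else ?b) k))"
    by (rule indep_setsD) (use A B in \<open>auto simp: response_events_def\<close>)
  then show ?thesis by (simp add: Int_commute)
qed

lemma distr_pair_eq_pair_measure:
  assumes i: "i < n"
  shows "distr M (borel \<Otimes>\<^sub>M N) (\<lambda>\<omega>. (Y i \<omega>, Eta i \<omega>)) = distr M borel (Y i) \<Otimes>\<^sub>M Q"
proof -
  let ?S = "distr M borel (Y i)" and ?T = "distr M N (Eta i)"
  interpret S: prob_space ?S by (rule prob_space_distr) (use i in simp)
  interpret T: prob_space ?T by (rule prob_space_distr) (use i in simp)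
  have "?S \<Otimes>\<^sub>M ?T = distr M (borel \<Otimes>\<^sub>M N) (\<lambda>\<omega>. (Y i \<omega>, Eta i \<omega>))"
  proof (rule pair_measure_eqI)
    show "sigma_finite_measure ?S" "sigma_finite_measure ?T" ..
    fix A B assume A: "A \<in> sets ?S" and B: "B \<in> sets ?T"
    have "(\<lambda>\<omega>. (Y i \<omega>, Eta i \<omega>)) -` (A \<times> B) \<inter> space M
        = Y i -` A \<inter> space M \<inter> (Eta i -` B \<inter> space M)" by auto
    then show "emeasure ?S A * emeasure ?T B
        = emeasure (distr M (borel \<Otimes>\<^sub>M N) (\<lambda>\<omega>. (Y i \<omega>, Eta i \<omega>))) (A \<times> B)"
      using A B i prob_vimage_Y_Int_vimage_Eta[OF i, of A B]
      by (simp add: emeasure_distr emeasure_eq_measure ennreal_mult)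
  qed simp
  then show ?thesis using Eta_distr[OF i] by simp
qed

lemma nn_integral_pair:
  assumes i: "i < n" and f: "f \<in> borel_measurable (borel \<Otimes>\<^sub>M N)"
  shows "(\<integral>\<^sup>+\<omega>. f (Y i \<omega>, Eta i \<omega>) \<partial>M) = (\<integral>\<^sup>+y. \<integral>\<^sup>+e. f (y, e) \<partial>Q \<partial>distr M borel (Y i))"
proof -
  interpret Q: prob_space Q by (rule prob_space_Q)
  have "sets (distr M borel (Y i) \<Otimes>\<^sub>M Q) = sets (borel \<Otimes>\<^sub>M N)"
    by (rule sets_pair_measure_cong) (simp_all add: sets_Q)
  then have f': "f \<in> borel_measurable (distr M borel (Y i) \<Otimes>\<^sub>M Q)"
    using f measurable_cong_sets by blast
  have "(\<integral>\<^sup>+\<omega>. f (Y i \<omega>, Eta i \<omega>) \<partial>M) = integral\<^sup>N (distr M borel (Y i) \<Otimes>\<^sub>M Q) f"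
    using nn_integral_distr[OF measurable_Y_Eta[OF i], of f] f distr_pair_eq_pair_measure[OF i] by simp
  also have "\<dots> = (\<integral>\<^sup>+y. \<integral>\<^sup>+e. f (y, e) \<partial>Q \<partial>distr M borel (Y i))"
    by (rule Q.nn_integral_fst[OF f', symmetric])
  finally show ?thesis .
qed

lemma
  assumes i: "i < n"
  shows integrable_t_Y: "integrable M (\<lambda>\<omega>. t (Y i \<omega>))"
    and expectation_psi_eq: "(\<integral>\<omega>. \<psi> (Y i \<omega>) (Eta i \<omega>) \<partial>M) = (\<integral>\<omega>. t (Y i \<omega>) \<partial>M)"
proof -
  interpret Q: prob_space Q by (rule prob_space_Q)
  interpret PY: prob_space "distr M borel (Y i)" by (rule prob_space_distr) (use i in simp)
  interpret pair_sigma_finite "distr M borel (Y i)" Q ..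
  have int: "integrable (distr M borel (Y i) \<Otimes>\<^sub>M Q) (\<lambda>(y, e). \<psi> y e)"
    using psi_int[OF i] integrable_distr_eq[OF measurable_Y_Eta[OF i] psi_meas]
    by (simp add: distr_pair_eq_pair_measure[OF i])
  have t_eq: "(\<lambda>y. \<integral>e. \<psi> y e \<partial>Q) = t" using unbiased by auto
  show "integrable M (\<lambda>\<omega>. t (Y i \<omega>))"
    using integrable_fst[OF int] integrable_distr_eq[OF Y_meas[OF i] t_meas] t_eq by simp
  have "(\<integral>\<omega>. \<psi> (Y i \<omega>) (Eta i \<omega>) \<partial>M) = integral\<^sup>L (distr M borel (Y i) \<Otimes>\<^sub>M Q) (\<lambda>(y, e). \<psi> y e)"
    using integral_distr[OF measurable_Y_Eta[OF i] psi_meas] by (simp add: distr_pair_eq_pair_measure[OF i])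
  also have "\<dots> = (\<integral>y. t y \<partial>distr M borel (Y i))"
    using integral_fst[OF int] t_eq by simp
  also have "\<dots> = (\<integral>\<omega>. t (Y i \<omega>) \<partial>M)"
    by (rule integral_distr[OF Y_meas[OF i] t_meas])
  finally show "(\<integral>\<omega>. \<psi> (Y i \<omega>) (Eta i \<omega>) \<partial>M) = (\<integral>\<omega>. t (Y i \<omega>) \<partial>M)" .
qed

definition noise :: "nat \<Rightarrow> 'a \<Rightarrow> real" where
  "noise i \<omega> = \<psi> (Y i \<omega>) (Eta i \<omega>) - (\<integral>w. t (Y i w) \<partial>M)"

lemma noise_meas[measurable]: "i < n \<Longrightarrow> noise i \<in> borel_measurable M"
  unfolding noise_def by measurable

lemma expectation_noise: "i < n \<Longrightarrow> expectation (noise i) = 0"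
  unfolding noise_def using psi_int expectation_psi_eq by (simp add: prob_space)

lemma indep_vars_noise: "indep_vars (\<lambda>_. borel) noise {..<n}"
proof -
  have "indep_vars (\<lambda>_. borel) (\<lambda>i \<omega>. (\<lambda>z. z - (\<integral>w. t (Y i w) \<partial>M)) (\<psi> (Y i \<omega>) (Eta i \<omega>))) {..<n}"
    by (rule indep_vars_compose2[OF indep_vars_pairs[OF psi_meas]]) auto
  then show ?thesis by (simp add: noise_def[abs_def])
qed

text \<open>Given \<open>Y\<^sub>i = y\<close> the noise is \<open>(\<psi>(y, \<eta>) - t(y)) + (t(y) - E t(Y\<^sub>i))\<close>; integrating over
  \<open>\<eta>\<close> first, the two moment generating functions multiply and the two second moments add.\<close>

lemma mgf_le_gaussian_noise:
  assumes i: "i < n" and sy: "subgaussian M (\<lambda>\<omega>. t (Y i \<omega>)) \<sigma>y"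
    and se: "\<And>y. subgaussian Q (\<psi> y) \<sigma>e"
  shows "mgf_le_gaussian M (noise i) (\<sigma>y\<^sup>2 + \<sigma>e\<^sup>2)"
  unfolding mgf_le_gaussian_def
proof
  fix l
  define \<mu> where "\<mu> = (\<integral>w. t (Y i w) \<partial>M)"
  let ?Py = "distr M borel (Y i)" and ?cy = "exp (\<sigma>y\<^sup>2 * l\<^sup>2 / 2)" and ?ce = "exp (\<sigma>e\<^sup>2 * l\<^sup>2 / 2)"
  interpret Q: prob_space Q by (rule prob_space_Q)
  have mgf_Q: "(\<integral>\<^sup>+e. exp (l * (\<psi> y e - t y)) \<partial>Q) \<le> ?ce" for y
    using se[of y] unbiased[of y]
    by (simp add: subgaussian_def nn_integral_eq_integral ennreal_leI)
  have mgf_M: "integrable M (\<lambda>\<omega>. exp (l * (t (Y i \<omega>) - \<mu>)))"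
      "(\<integral>\<omega>. exp (l * (t (Y i \<omega>) - \<mu>)) \<partial>M) \<le> ?cy"
    using sy unfolding subgaussian_def \<mu>_def by auto
  have "(\<integral>\<^sup>+\<omega>. exp (l * noise i \<omega>) \<partial>M) = (\<integral>\<^sup>+y. \<integral>\<^sup>+e. exp (l * (\<psi> y e - \<mu>)) \<partial>Q \<partial>?Py)"
    using nn_integral_pair[OF i, of "\<lambda>(y,e). ennreal (exp (l * (\<psi> y e - \<mu>)))"]
    by (simp add: noise_def \<mu>_def)
  also have "\<dots> = (\<integral>\<^sup>+y. exp (l * (t y - \<mu>)) * (\<integral>\<^sup>+e. exp (l * (\<psi> y e - t y)) \<partial>Q) \<partial>?Py)"
  proof (rule nn_integral_cong)
    fix y
    have "(\<integral>\<^sup>+e. exp (l * (\<psi> y e - \<mu>)) \<partial>Q)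
        = (\<integral>\<^sup>+e. ennreal (exp (l * (t y - \<mu>))) * exp (l * (\<psi> y e - t y)) \<partial>Q)"
      by (rule nn_integral_cong) (simp add: ennreal_mult[symmetric] exp_add[symmetric] algebra_simps)
    also have "\<dots> = exp (l * (t y - \<mu>)) * (\<integral>\<^sup>+e. exp (l * (\<psi> y e - t y)) \<partial>Q)"
      by (rule nn_integral_cmult) measurable
    finally show "(\<integral>\<^sup>+e. exp (l * (\<psi> y e - \<mu>)) \<partial>Q)
        = exp (l * (t y - \<mu>)) * (\<integral>\<^sup>+e. exp (l * (\<psi> y e - t y)) \<partial>Q)" .
  qed
  also have "\<dots> \<le> (\<integral>\<^sup>+y. ennreal (exp (l * (t y - \<mu>))) * ennreal ?ce \<partial>?Py)"
    by (intro nn_integral_mono mult_left_mono mgf_Q) auto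
  also have "\<dots> = (\<integral>\<^sup>+\<omega>. exp (l * (t (Y i \<omega>) - \<mu>)) \<partial>M) * ennreal ?ce"
    using i by (simp add: nn_integral_distr nn_integral_multc)
  also have "\<dots> \<le> ennreal ?cy * ennreal ?ce"
    using mgf_M by (simp add: nn_integral_eq_integral mult_right_mono ennreal_leI)
  also have "\<dots> = exp ((\<sigma>y\<^sup>2 + \<sigma>e\<^sup>2) * l\<^sup>2 / 2)"
    by (simp add: ennreal_mult[symmetric] exp_add[symmetric] add_divide_distrib distrib_right)
  finally have le: "(\<integral>\<^sup>+\<omega>. exp (l * noise i \<omega>) \<partial>M) \<le> exp ((\<sigma>y\<^sup>2 + \<sigma>e\<^sup>2) * l\<^sup>2 / 2)" .
  have int: "integrable M (\<lambda>\<omega>. exp (l * noise i \<omega>))"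
    by (rule integrableI_nonneg) (use i le in \<open>auto intro: le_less_trans\<close>)
  then show "integrable M (\<lambda>\<omega>. exp (l * noise i \<omega>)) \<and>
      (\<integral>\<omega>. exp (l * noise i \<omega>) \<partial>M) \<le> exp ((\<sigma>y\<^sup>2 + \<sigma>e\<^sup>2) * l\<^sup>2 / 2)"
    using le by (simp add: nn_integral_eq_integral)
qed

lemma second_moment_noise_le:
  assumes i: "i < n" and sy: "variance_le M (\<lambda>\<omega>. t (Y i \<omega>)) \<sigma>y"
    and se: "\<And>y. variance_le Q (\<psi> y) \<sigma>e"
  shows "integrable M (\<lambda>\<omega>. (noise i \<omega>)\<^sup>2)" and "(\<integral>\<omega>. (noise i \<omega>)\<^sup>2 \<partial>M) \<le> \<sigma>y\<^sup>2 + \<sigma>e\<^sup>2"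
proof -
  define \<mu> where "\<mu> = (\<integral>w. t (Y i w) \<partial>M)"
  let ?Py = "distr M borel (Y i)"
  interpret Q: prob_space Q by (rule prob_space_Q)
  have var_Q: "(\<integral>\<^sup>+e. (\<psi> y e - \<mu>)\<^sup>2 \<partial>Q) \<le> \<sigma>e\<^sup>2 + (t y - \<mu>)\<^sup>2" for y
  proof -
    have v: "integrable Q (\<psi> y)" "integrable Q (\<lambda>e. (\<psi> y e)\<^sup>2)" "(\<integral>e. (\<psi> y e - t y)\<^sup>2 \<partial>Q) \<le> \<sigma>e\<^sup>2"
      using se[of y] unbiased[of y] unfolding variance_le_def by auto
    have int_sq: "integrable Q (\<lambda>e. (\<psi> y e - c)\<^sup>2)" for c
      using v(1,2) by (rule Q.integrable_square_diff_const)
    have "(\<integral>e. (\<psi> y e - \<mu>)\<^sup>2 \<partial>Q)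
        = (\<integral>e. (\<psi> y e - t y)\<^sup>2 + (2 * (t y - \<mu>)) * (\<psi> y e - t y) + (t y - \<mu>)\<^sup>2 \<partial>Q)"
      by (rule Bochner_Integration.integral_cong) (auto simp: power2_eq_square algebra_simps)
    also have "\<dots> = (\<integral>e. (\<psi> y e - t y)\<^sup>2 \<partial>Q) + (t y - \<mu>)\<^sup>2"
      using v int_sq unbiased[of y] by (simp add: Q.prob_space)
    finally show ?thesis
      using v(3) int_sq[of \<mu>] by (simp add: nn_integral_eq_integral ennreal_leI)
  qed
  have vy: "integrable M (\<lambda>\<omega>. t (Y i \<omega>))" "integrable M (\<lambda>\<omega>. (t (Y i \<omega>))\<^sup>2)"
      "(\<integral>\<omega>. (t (Y i \<omega>) - \<mu>)\<^sup>2 \<partial>M) \<le> \<sigma>y\<^sup>2"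
    using sy unfolding variance_le_def \<mu>_def by auto
  have int_y: "integrable M (\<lambda>\<omega>. (t (Y i \<omega>) - \<mu>)\<^sup>2)"
    using vy(1,2) by (rule integrable_square_diff_const)
  have "(\<integral>\<^sup>+\<omega>. (noise i \<omega>)\<^sup>2 \<partial>M) = (\<integral>\<^sup>+y. \<integral>\<^sup>+e. (\<psi> y e - \<mu>)\<^sup>2 \<partial>Q \<partial>?Py)"
    using nn_integral_pair[OF i, of "\<lambda>(y,e). ennreal ((\<psi> y e - \<mu>)\<^sup>2)"]
    by (simp add: noise_def \<mu>_def)
  also have "\<dots> \<le> (\<integral>\<^sup>+y. \<sigma>e\<^sup>2 + (t y - \<mu>)\<^sup>2 \<partial>?Py)"
    by (intro nn_integral_mono var_Q)
  also have "\<dots> = (\<integral>\<^sup>+\<omega>. \<sigma>e\<^sup>2 + (t (Y i \<omega>) - \<mu>)\<^sup>2 \<partial>M)"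
    using i by (simp add: nn_integral_distr)
  also have "\<dots> = \<sigma>e\<^sup>2 + (\<integral>\<omega>. (t (Y i \<omega>) - \<mu>)\<^sup>2 \<partial>M)"
    using int_y by (subst nn_integral_eq_integral) (auto simp: prob_space)
  also have "\<dots> \<le> \<sigma>y\<^sup>2 + \<sigma>e\<^sup>2"
    using vy(3) by (intro ennreal_leI) simp
  finally have le: "(\<integral>\<^sup>+\<omega>. (noise i \<omega>)\<^sup>2 \<partial>M) \<le> \<sigma>y\<^sup>2 + \<sigma>e\<^sup>2" .
  show int: "integrable M (\<lambda>\<omega>. (noise i \<omega>)\<^sup>2)"
    by (rule integrableI_nonneg) (use i le in \<open>auto intro: le_less_trans\<close>)
  show "(\<integral>\<omega>. (noise i \<omega>)\<^sup>2 \<partial>M) \<le> \<sigma>y\<^sup>2 + \<sigma>e\<^sup>2"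
    using le int by (simp add: nn_integral_eq_integral flip: ennreal_plus)
qed

end

section \<open>Uniform deviation of the empirical loss\<close>

locale regression_design = noisy_responses +
  fixes \<phi> :: "nat \<Rightarrow> real \<Rightarrow> real" and q p :: nat and x :: "nat \<Rightarrow> nat \<Rightarrow> real" and B :: real
  assumes p: "p > 0" and q: "q > 0"
    and bnd: "\<And>i k l. i < n \<Longrightarrow> k < q \<Longrightarrow> l < p \<Longrightarrow> \<bar>\<phi> k (x i l)\<bar> \<le> B"
begin

abbreviation loss_eta :: "(nat \<times> nat \<Rightarrow> real) \<Rightarrow> 'a \<Rightarrow> real" where
  "loss_eta \<nu> \<equiv> Lhat_eta t \<psi> \<phi> q p n x Y Eta \<nu>"

definition design_weight :: "nat \<times> nat \<Rightarrow> nat \<Rightarrow> real" where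
  "design_weight j i = - basis_fun \<phi> j (x i) / real n"

definition score :: "nat \<times> nat \<Rightarrow> 'a \<Rightarrow> real" where
  "score j \<omega> = (\<Sum>i<n. design_weight j i * noise i \<omega>)"

lemma B_nonneg: "B \<ge> 0"
  using bnd[of 0 0 0] n p q by auto

lemma abs_design_weight_le: "i < n \<Longrightarrow> j \<in> {..<q} \<times> {..<p} \<Longrightarrow> \<bar>design_weight j i\<bar> \<le> B / real n"
  using bnd[of i "fst j" "snd j"] n
  by (auto simp: design_weight_def basis_fun_def divide_right_mono)

lemma score_meas[measurable]: "score j \<in> borel_measurable M"
  unfolding score_def by (intro borel_measurable_sum borel_measurable_times) auto

lemma expectation_loss_eta:
  "expectation (loss_eta \<nu>)
    = 1 / real n * (\<Sum>i<n. - (\<integral>w. t (Y i w) \<partial>M) * predictor \<phi> q p \<nu> (x i) + logZ t (predictor \<phi> q p \<nu> (x i)))"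
proof -
  have "expectation (loss_eta \<nu>) = 1 / real n * (\<Sum>i<n. - (\<integral>\<omega>. \<psi> (Y i \<omega>) (Eta i \<omega>) \<partial>M)
      * predictor \<phi> q p \<nu> (x i) + logZ t (predictor \<phi> q p \<nu> (x i)))"
    unfolding Lhat_eta_def by (rule integral_scaled_affine_sum) (rule psi_int)
  then show ?thesis by (simp add: expectation_psi_eq)
qed

lemma expectation_loss_eta_eq_Lhat:
  "expectation (loss_eta \<nu>) = expectation (Lhat t \<phi> q p n x Y \<nu>)"
  unfolding expectation_loss_eta Lhat_def
  by (rule integral_scaled_affine_sum[symmetric]) (rule integrable_t_Y)

lemma loss_eta_deviation_eq:
  assumes "\<omega> \<in> space M"
  shows "loss_eta \<nu> \<omega> - expectation (loss_eta \<nu>) = (\<Sum>j\<in>{..<q} \<times> {..<p}. \<nu> j * score j \<omega>)"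
proof -
  have "loss_eta \<nu> \<omega> - expectation (loss_eta \<nu>)
      = 1 / real n * (\<Sum>i<n. - noise i \<omega> * predictor \<phi> q p \<nu> (x i))"
    unfolding expectation_loss_eta Lhat_eta_def right_diff_distrib[symmetric] sum_subtractf[symmetric]
    by (simp add: noise_def algebra_simps)
  also have "\<dots> = (\<Sum>i<n. \<Sum>j\<in>{..<q} \<times> {..<p}. \<nu> j * (design_weight j i * noise i \<omega>))"
    unfolding predictor_def design_weight_def
    by (simp add: sum_distrib_left sum_distrib_right sum_negf[symmetric] algebra_simps)
  also have "\<dots> = (\<Sum>j\<in>{..<q} \<times> {..<p}. \<nu> j * score j \<omega>)"
    unfolding score_def by (subst sum.swap) (simp add: sum_distrib_left)
  finally show ?thesis .
qed

lemma prob_uniform_deviation_bound_ge: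
  assumes tail: "\<And>j. j \<in> {..<q} \<times> {..<p} \<Longrightarrow>
      prob {\<omega> \<in> space M. \<bar>score j \<omega>\<bar> > s} \<le> \<delta> / (real q * real p)"
  shows "prob {\<omega> \<in> space M. \<forall>\<nu>. \<bar>loss_eta \<nu> \<omega> - expectation (loss_eta \<nu>)\<bar> \<le> s * pred_norm q p \<nu>}
    \<ge> 1 - \<delta>"
proof -
  have "{\<omega> \<in> space M. \<forall>\<nu>. \<bar>loss_eta \<nu> \<omega> - expectation (loss_eta \<nu>)\<bar> \<le> s * pred_norm q p \<nu>}
      = {\<omega> \<in> space M. \<forall>j\<in>{..<q} \<times> {..<p}. \<bar>score j \<omega>\<bar> \<le> s}"
  proof -
    have "(\<forall>\<nu>. \<bar>loss_eta \<nu> \<omega> - expectation (loss_eta \<nu>)\<bar> \<le> s * pred_norm q p \<nu>)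
        \<longleftrightarrow> (\<forall>j\<in>{..<q} \<times> {..<p}. \<bar>score j \<omega>\<bar> \<le> s)" if "\<omega> \<in> space M" for \<omega>
      unfolding pred_norm_def loss_eta_deviation_eq[OF that] by (rule abs_sum_mult_le_l1_iff) simp
    then show ?thesis by auto
  qed
  moreover have "prob {\<omega> \<in> space M. \<forall>j\<in>{..<q} \<times> {..<p}. \<bar>score j \<omega>\<bar> \<le> s} \<ge> 1 - \<delta>"
    by (rule prob_all_abs_le_ge_union_bound) (use p q tail in \<open>auto simp: card_cartesian_product\<close>)
  ultimately show ?thesis by simp
qed

lemma mgf_le_gaussian_score:
  assumes "\<forall>i<n. subgaussian M (\<lambda>\<omega>. t (Y i \<omega>)) \<sigma>y" and "\<forall>y. subgaussian Q (\<psi> y) \<sigma>e"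
    and j: "j \<in> {..<q} \<times> {..<p}"
  shows "mgf_le_gaussian M (score j) ((\<sigma>y\<^sup>2 + \<sigma>e\<^sup>2) * (B / real n)\<^sup>2 * real n)"
  unfolding score_def[abs_def]
  using mgf_le_gaussian_weighted_sum[OF _ indep_vars_noise, of "\<sigma>y\<^sup>2 + \<sigma>e\<^sup>2" "design_weight j" "B / real n"]
    mgf_le_gaussian_noise abs_design_weight_le[OF _ j] assms
  by simp

lemma second_moment_score_le:
  assumes sy: "\<forall>i<n. variance_le M (\<lambda>\<omega>. t (Y i \<omega>)) \<sigma>y" and se: "\<forall>y. variance_le Q (\<psi> y) \<sigma>e"
    and j: "j \<in> {..<q} \<times> {..<p}"
  shows "integrable M (\<lambda>\<omega>. (score j \<omega>)\<^sup>2)"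
    and "(\<integral>\<omega>. (score j \<omega>)\<^sup>2 \<partial>M) \<le> (\<sigma>y\<^sup>2 + \<sigma>e\<^sup>2) * B\<^sup>2 / real n"
proof -
  note moments = second_moment_weighted_sum_indep[OF _ indep_vars_noise, of "design_weight j"]
  note noise_sq = second_moment_noise_le[of _ \<sigma>y \<sigma>e]
  show "integrable M (\<lambda>\<omega>. (score j \<omega>)\<^sup>2)"
    using moments(1) noise_sq sy se expectation_noise by (simp add: score_def)
  have "(\<integral>\<omega>. (score j \<omega>)\<^sup>2 \<partial>M) = (\<Sum>i<n. (design_weight j i)\<^sup>2 * (\<integral>\<omega>. (noise i \<omega>)\<^sup>2 \<partial>M))"
    using moments(2) noise_sq sy se expectation_noise by (simp add: score_def)
  also have "\<dots> \<le> (\<Sum>i<n. (B / real n)\<^sup>2 * (\<sigma>y\<^sup>2 + \<sigma>e\<^sup>2))"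
  proof (rule sum_mono)
    fix i assume "i \<in> {..<n}"
    then have "(design_weight j i)\<^sup>2 \<le> (B / real n)\<^sup>2"
        and "0 \<le> (\<integral>\<omega>. (noise i \<omega>)\<^sup>2 \<partial>M)" "(\<integral>\<omega>. (noise i \<omega>)\<^sup>2 \<partial>M) \<le> \<sigma>y\<^sup>2 + \<sigma>e\<^sup>2"
      using power_mono[OF abs_design_weight_le[OF _ j] abs_ge_zero, of i 2] noise_sq sy se by simp_all
    then show "(design_weight j i)\<^sup>2 * (\<integral>\<omega>. (noise i \<omega>)\<^sup>2 \<partial>M) \<le> (B / real n)\<^sup>2 * (\<sigma>y\<^sup>2 + \<sigma>e\<^sup>2)"
      by (intro mult_mono) auto
  qed
  also have "\<dots> = (\<sigma>y\<^sup>2 + \<sigma>e\<^sup>2) * B\<^sup>2 / real n"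
    using n by (simp add: power2_eq_square field_simps)
  finally show "(\<integral>\<omega>. (score j \<omega>)\<^sup>2 \<partial>M) \<le> (\<sigma>y\<^sup>2 + \<sigma>e\<^sup>2) * B\<^sup>2 / real n" .
qed

theorem subgaussian_uniform_deviation_bound:
  assumes sy: "\<forall>i<n. subgaussian M (\<lambda>\<omega>. t (Y i \<omega>)) \<sigma>y" and se: "\<forall>y. subgaussian Q (\<psi> y) \<sigma>e"
    and \<delta>: "0 < \<delta>" "\<delta> < 1"
  shows "prob {\<omega> \<in> space M. \<forall>\<nu>. \<bar>loss_eta \<nu> \<omega> - expectation (loss_eta \<nu>)\<bar>
      \<le> sqrt (\<sigma>y\<^sup>2 + \<sigma>e\<^sup>2) * B * sqrt (2 / real n * (ln (real p) + ln (real q) + ln (2 / \<delta>)))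
         * pred_norm q p \<nu>} \<ge> 1 - \<delta>"
proof (rule prob_uniform_deviation_bound_ge)
  define v where "v = \<sigma>y\<^sup>2 + \<sigma>e\<^sup>2"
  define L where "L = ln (real p) + ln (real q) + ln (2 / \<delta>)"
  define V where "V = v * (B / real n)\<^sup>2 * real n"
  let ?s = "sqrt v * B * sqrt (2 / real n * L)"
  fix j assume j: "j \<in> {..<q} \<times> {..<p}"
  have mgf: "mgf_le_gaussian M (score j) V"
    using mgf_le_gaussian_score[OF sy se j] by (simp add: V_def v_def)
  have L: "L > 0" unfolding L_def using p q \<delta> by (auto intro!: add_nonneg_pos)
  have "prob {\<omega> \<in> space M. \<bar>score j \<omega>\<bar> > ?s} \<le> \<delta> / (real q * real p)"
  proof (cases "V = 0")
    case True
    with mgf have "AE \<omega> in M. score j \<omega> = 0" by (simp add: AE_eq_0_if_mgf_le_gaussian_0)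
    then show ?thesis
      using prob_abs_gt_eq_0_if_AE_eq_0[OF score_meas, of j ?s] L B_nonneg \<delta> by (simp add: v_def)
  next
    case False
    then have "v \<noteq> 0" "B \<noteq> 0" by (auto simp: V_def)
    moreover have "v \<ge> 0" by (simp add: v_def)
    ultimately have v: "v > 0" and B: "B > 0" using B_nonneg by linarith+
    have V: "V > 0" using v B n by (simp add: V_def)
    have s: "?s > 0" using v B L n by simp
    have s_sq: "?s\<^sup>2 / (2 * V) = L"
      unfolding V_def using v B L n
      by (simp add: power_mult_distrib real_sqrt_pow2 field_simps power2_eq_square)
    have "exp L = real p * real q * (2 / \<delta>)"
      using p q \<delta> by (simp add: L_def exp_add)
    then have exp_L: "2 * exp (- L) = \<delta> / (real q * real p)"
      using p q \<delta> by (simp add: exp_minus field_simps)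
    show ?thesis
      using prob_abs_gt_le_if_mgf_le_gaussian[OF score_meas mgf V s] s_sq exp_L by simp
  qed
  then show "prob {\<omega> \<in> space M. \<bar>score j \<omega>\<bar> > sqrt (\<sigma>y\<^sup>2 + \<sigma>e\<^sup>2) * B
      * sqrt (2 / real n * (ln (real p) + ln (real q) + ln (2 / \<delta>)))} \<le> \<delta> / (real q * real p)"
    by (simp add: v_def L_def)
qed

theorem variance_uniform_deviation_bound:
  assumes sy: "\<forall>i<n. variance_le M (\<lambda>\<omega>. t (Y i \<omega>)) \<sigma>y" and se: "\<forall>y. variance_le Q (\<psi> y) \<sigma>e"
    and \<delta>: "0 < \<delta>" "\<delta> < 1"
  shows "prob {\<omega> \<in> space M. \<forall>\<nu>. \<bar>loss_eta \<nu> \<omega> - expectation (loss_eta \<nu>)\<bar>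
      \<le> sqrt (\<sigma>y\<^sup>2 + \<sigma>e\<^sup>2) * B * sqrt (real q * real p / (real n * \<delta>)) * pred_norm q p \<nu>} \<ge> 1 - \<delta>"
proof (rule prob_uniform_deviation_bound_ge)
  define v where "v = \<sigma>y\<^sup>2 + \<sigma>e\<^sup>2"
  let ?s = "sqrt v * B * sqrt (real q * real p / (real n * \<delta>))"
  fix j assume j: "j \<in> {..<q} \<times> {..<p}"
  note moment = second_moment_score_le[OF sy se j, folded v_def]
  have "prob {\<omega> \<in> space M. \<bar>score j \<omega>\<bar> > ?s} \<le> \<delta> / (real q * real p)"
  proof (cases "v * B\<^sup>2 = 0")
    case True
    with moment have "AE \<omega> in M. score j \<omega> = 0"
      by (intro AE_eq_0_if_second_moment_le_0) auto
    then show ?thesis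
      using prob_abs_gt_eq_0_if_AE_eq_0[OF score_meas, of j ?s] B_nonneg \<delta> by (simp add: v_def)
  next
    case False
    then have "v > 0" "B > 0"
      using B_nonneg by (auto simp: v_def less_le)
    then have s: "?s > 0" using p q n \<delta> by simp
    have "prob {\<omega> \<in> space M. \<bar>score j \<omega>\<bar> > ?s} \<le> prob {\<omega> \<in> space M. \<bar>score j \<omega>\<bar> \<ge> ?s}"
      by (intro finite_measure_mono) auto
    also have "\<dots> \<le> (\<integral>\<omega>. (score j \<omega>)\<^sup>2 \<partial>M) / ?s\<^sup>2"
      by (rule second_moment_method[OF score_meas moment(1) s])
    also have "\<dots> \<le> (v * B\<^sup>2 / real n) / ?s\<^sup>2"
      using moment(2) by (intro divide_right_mono) auto
    also have "\<dots> = \<delta> / (real q * real p)"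
      using \<open>v > 0\<close> \<open>B > 0\<close> p q n \<delta> by (simp add: power_mult_distrib field_simps power2_eq_square)
    finally show ?thesis .
  qed
  then show "prob {\<omega> \<in> space M. \<bar>score j \<omega>\<bar> > sqrt (\<sigma>y\<^sup>2 + \<sigma>e\<^sup>2) * B
      * sqrt (real q * real p / (real n * \<delta>))} \<le> \<delta> / (real q * real p)"
    by (simp add: v_def)
qed

end

section \<open>Rates\<close>

lemma sqrt_powr_double_minus_one:
  fixes N :: real
  assumes "N > 0"
  shows "sqrt (N powr (2 * \<beta> - 1)) = N powr (\<beta> - 1/2)"
proof -
  have "N powr (2 * \<beta> - 1) = (N powr (\<beta> - 1/2))\<^sup>2"
    using assms by (simp add: power2_eq_square powr_add[symmetric])
  then show ?thesis by simp
qed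

lemma variance_rate_le:
  fixes B :: real and p :: nat
  assumes B: "B \<ge> 0" and p: "p > 0"
  shows "\<exists>C>0. \<forall>(n'::nat) (\<delta>::real) (\<sigma>::real).
        1 \<le> n' \<longrightarrow> 0 < \<delta> \<longrightarrow> \<delta> < 1 \<longrightarrow> 0 \<le> \<sigma> \<longrightarrow>
        \<sigma> * B * sqrt (real n' powr (2 * \<beta>) * real p / (real n' * \<delta>))
          \<le> C * \<sigma> * real n' powr (\<beta> - 1/2) * sqrt (1 / \<delta>)"
proof (intro exI[of _ "(B + 1) * sqrt (real p)"] conjI allI impI)
  show "0 < (B + 1) * sqrt (real p)" using B p by auto
  fix n' :: nat and \<delta> \<sigma> :: real
  assume n': "1 \<le> n'" and \<delta>: "0 < \<delta>" "\<delta> < 1" and \<sigma>: "0 \<le> \<sigma>"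
  define N where "N = real n'"
  have N: "N > 0" using n' by (simp add: N_def)
  have "N powr (2 * \<beta>) * real p / (N * \<delta>) = real p * N powr (2 * \<beta> - 1) * (1 / \<delta>)"
    using N \<delta> by (simp add: powr_diff field_simps)
  then have eq: "sqrt (N powr (2 * \<beta>) * real p / (N * \<delta>)) = sqrt (real p) * N powr (\<beta> - 1/2) * sqrt (1 / \<delta>)"
    by (simp only: real_sqrt_mult sqrt_powr_double_minus_one[OF N])
  have "\<sigma> * B * (sqrt (real p) * N powr (\<beta> - 1/2) * sqrt (1 / \<delta>))
      \<le> \<sigma> * (B + 1) * (sqrt (real p) * N powr (\<beta> - 1/2) * sqrt (1 / \<delta>))"
    using \<sigma> \<delta> by (intro mult_right_mono mult_left_mono) auto
  then show "\<sigma> * B * sqrt (real n' powr (2 * \<beta>) * real p / (real n' * \<delta>))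
      \<le> (B + 1) * sqrt (real p) * \<sigma> * real n' powr (\<beta> - 1/2) * sqrt (1 / \<delta>)"
    unfolding N_def[symmetric] eq by (simp add: ac_simps)
qed

lemma log_terms_le_const_mult:
  fixes a E L :: real
  assumes a: "a \<ge> 0" and E: "E \<ge> 1" and L: "L \<ge> ln 2"
  shows "a + E + (ln 2 + L) \<le> (a / ln 2 + 1 / ln 2 + 2) * (E * L)"
proof -
  have l2: "ln (2::real) > 0" by simp
  have EL: "E * L \<ge> ln 2" using mult_mono[OF E L] l2 E by simp
  have "L \<ge> 0" using L l2 by linarith
  then have EL1: "E * L \<ge> L" using mult_right_mono[OF E] by simp
  have "E * ln 2 \<le> E * L" using E L by (intro mult_left_mono) auto
  then have EL2: "E \<le> E * L / ln 2" using l2 by (simp add: pos_le_divide_eq)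
  have "a = a / ln 2 * ln 2" using l2 by simp
  also have "\<dots> \<le> a / ln 2 * (E * L)" using a l2 EL by (intro mult_left_mono) auto
  finally have "a \<le> a / ln 2 * (E * L)" .
  then show ?thesis
    using EL EL1 EL2 by (simp add: distrib_right)
qed

lemma subgaussian_rate_le:
  fixes B :: real and p :: nat
  assumes B: "B \<ge> 0" and p: "p > 0" and \<beta>: "\<beta> > 0"
  shows "\<exists>C>0. \<forall>(n'::nat) (\<delta>::real) (\<sigma>::real).
        1 \<le> n' \<longrightarrow> 0 < \<delta> \<longrightarrow> \<delta> \<le> 1/2 \<longrightarrow> 0 \<le> \<sigma> \<longrightarrow>
        \<sigma> * B * sqrt (2 / real n' * (ln (real p) + ln (exp (real n' powr (2 * \<beta>))) + ln (2 / \<delta>)))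
          \<le> C * \<sigma> * real n' powr (\<beta> - 1/2) * sqrt (ln (1 / \<delta>))"
proof -
  define A where "A = ln (real p) / ln 2 + 1 / ln 2 + 2"
  have A: "A > 0" unfolding A_def using p by (intro add_nonneg_pos) auto
  show ?thesis
  proof (intro exI[of _ "(B + 1) * sqrt (2 * A)"] conjI allI impI)
    show "0 < (B + 1) * sqrt (2 * A)" using B A by auto
    fix n' :: nat and \<delta> \<sigma> :: real
    assume n': "1 \<le> n'" and \<delta>: "0 < \<delta>" "\<delta> \<le> 1/2" and \<sigma>: "0 \<le> \<sigma>"
    define N where "N = real n'"
    define L where "L = ln (1 / \<delta>)"
    define E where "E = N powr (2 * \<beta>)"
    have N: "N \<ge> 1" using n' by (simp add: N_def)
    have E: "E \<ge> 1" unfolding E_def using N \<beta> by (intro ge_one_powr_ge_zero) auto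
    have "2 \<le> 1 / \<delta>" using \<delta> by (simp add: le_divide_eq)
    then have L: "L \<ge> ln 2" unfolding L_def using \<delta> by (subst ln_le_cancel_iff) auto
    have L_pos: "L > 0" using L ln_gt_zero[of "2::real"] by linarith
    have ln_2_div: "ln (2 / \<delta>) = ln 2 + L" unfolding L_def using \<delta> by (simp add: ln_div)
    have "2 / N * (ln (real p) + E + (ln 2 + L)) \<le> 2 / N * (A * (E * L))"
      using log_terms_le_const_mult[OF _ E L, of "ln (real p)"] p N unfolding A_def
      by (intro mult_left_mono) auto
    also have "\<dots> = (2 * A) * N powr (2 * \<beta> - 1) * L"
      using N by (simp add: E_def powr_diff field_simps)
    finally have "sqrt (2 / N * (ln (real p) + E + (ln 2 + L))) \<le> sqrt ((2 * A) * N powr (2 * \<beta> - 1) * L)"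
      by (rule real_sqrt_le_mono)
    also have "\<dots> = sqrt (2 * A) * N powr (\<beta> - 1/2) * sqrt L"
      using N by (simp only: real_sqrt_mult sqrt_powr_double_minus_one)
    finally have "\<sigma> * B * sqrt (2 / N * (ln (real p) + E + (ln 2 + L)))
        \<le> \<sigma> * B * (sqrt (2 * A) * N powr (\<beta> - 1/2) * sqrt L)"
      using \<sigma> B by (intro mult_left_mono) auto
    also have "\<dots> \<le> \<sigma> * (B + 1) * (sqrt (2 * A) * N powr (\<beta> - 1/2) * sqrt L)"
      using \<sigma> A L_pos by (intro mult_right_mono mult_left_mono) auto
    finally show "\<sigma> * B * sqrt (2 / real n' * (ln (real p) + ln (exp (real n' powr (2 * \<beta>))) + ln (2 / \<delta>)))
        \<le> (B + 1) * sqrt (2 * A) * \<sigma> * real n' powr (\<beta> - 1/2) * sqrt (ln (1 / \<delta>))"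
      unfolding N_def[symmetric] ln_2_div E_def[symmetric] L_def[symmetric] by (simp add: ac_simps)
  qed
qed

theorem theorem9:
  fixes M :: "'a measure" and N :: "'e measure" and Q :: "'e measure"
    and n p q :: nat and B :: real
    and x :: "nat \<Rightarrow> nat \<Rightarrow> real"
    and \<phi> :: "nat \<Rightarrow> real \<Rightarrow> real"
    and Y :: "nat \<Rightarrow> 'a \<Rightarrow> real" and Eta :: "nat \<Rightarrow> 'a \<Rightarrow> 'e"
    and t :: "real \<Rightarrow> real" and \<psi> :: "real \<Rightarrow> 'e \<Rightarrow> real"
  assumes M: "prob_space M"
    and n: "n > 0" and p: "p > 0" and q: "q > 0"
    and ortho: "orthonormal_funs \<phi> q"
    and bnd: "\<And>i k l. i < n \<Longrightarrow> k < q \<Longrightarrow> l < p \<Longrightarrow> \<bar>\<phi> k (x i l)\<bar> \<le> B"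
    and Y_meas: "\<And>i. i < n \<Longrightarrow> Y i \<in> borel_measurable M"
    and Eta_meas: "\<And>i. i < n \<Longrightarrow> Eta i \<in> measurable M N"
    and t_meas: "t \<in> borel_measurable borel"
    and psi_meas: "(\<lambda>(y, e). \<psi> y e) \<in> borel_measurable (borel \<Otimes>\<^sub>M N)"
    and indep: "prob_space.indep_sets M
          (\<lambda>k. case k of
              Inl i \<Rightarrow> {Y i -` A \<inter> space M | A. A \<in> sets borel}
            | Inr i \<Rightarrow> {Eta i -` A \<inter> space M | A. A \<in> sets N})
          ({..<n} <+> {..<n})"
    and Eta_distr: "\<And>i. i < n \<Longrightarrow> distr M N (Eta i) = Q"
    and unbiased: "\<And>y. integrable Q (\<psi> y) \<and> (\<integral>e. \<psi> y e \<partial>Q) = t y"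
    and psi_int: "\<And>i. i < n \<Longrightarrow> integrable M (\<lambda>\<omega>. \<psi> (Y i \<omega>) (Eta i \<omega>))"
  shows
    "(\<forall>\<nu>. (\<integral>\<omega>. Lhat_eta t \<psi> \<phi> q p n x Y Eta \<nu> \<omega> \<partial>M) = (\<integral>\<omega>. Lhat t \<phi> q p n x Y \<nu> \<omega> \<partial>M))
     \<and>
     (\<forall>\<sigma>y \<sigma>e \<delta>::real.
        (\<forall>i<n. subgaussian M (\<lambda>\<omega>. t (Y i \<omega>)) \<sigma>y) \<longrightarrow>
        (\<forall>y. subgaussian Q (\<psi> y) \<sigma>e) \<longrightarrow> 0 < \<delta> \<longrightarrow> \<delta> < 1 \<longrightarrow>
        measure M {\<omega> \<in> space M. \<forall>\<nu>.
           \<bar>Lhat_eta t \<psi> \<phi> q p n x Y Eta \<nu> \<omega> - (\<integral>w. Lhat_eta t \<psi> \<phi> q p n x Y Eta \<nu> w \<partial>M)\<bar>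
             \<le> sqrt (\<sigma>y\<^sup>2 + \<sigma>e\<^sup>2) * B
                * sqrt (2 / real n * (ln (real p) + ln (real q) + ln (2 / \<delta>))) * pred_norm q p \<nu>}
          \<ge> 1 - \<delta>)
     \<and>
     (\<forall>\<beta>::real. 0 < \<beta> \<longrightarrow> \<beta> < 1/2 \<longrightarrow> (\<exists>C>0. \<forall>(n'::nat) (\<delta>::real) (\<sigma>::real).
        1 \<le> n' \<longrightarrow> 0 < \<delta> \<longrightarrow> \<delta> \<le> 1/2 \<longrightarrow> 0 \<le> \<sigma> \<longrightarrow>
        \<sigma> * B * sqrt (2 / real n' * (ln (real p) + ln (exp (real n' powr (2 * \<beta>))) + ln (2 / \<delta>)))
          \<le> C * \<sigma> * real n' powr (\<beta> - 1/2) * sqrt (ln (1 / \<delta>))))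
     \<and>
     (\<forall>\<sigma>y \<sigma>e \<delta>::real.
        (\<forall>i<n. variance_le M (\<lambda>\<omega>. t (Y i \<omega>)) \<sigma>y) \<longrightarrow>
        (\<forall>y. variance_le Q (\<psi> y) \<sigma>e) \<longrightarrow> 0 < \<delta> \<longrightarrow> \<delta> < 1 \<longrightarrow>
        measure M {\<omega> \<in> space M. \<forall>\<nu>.
           \<bar>Lhat_eta t \<psi> \<phi> q p n x Y Eta \<nu> \<omega> - (\<integral>w. Lhat_eta t \<psi> \<phi> q p n x Y Eta \<nu> w \<partial>M)\<bar>
             \<le> sqrt (\<sigma>y\<^sup>2 + \<sigma>e\<^sup>2) * B * sqrt (real q * real p / (real n * \<delta>)) * pred_norm q p \<nu>}
          \<ge> 1 - \<delta>)
     \<and>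
     (\<forall>\<beta>::real. 0 < \<beta> \<longrightarrow> \<beta> < 1/2 \<longrightarrow> (\<exists>C>0. \<forall>(n'::nat) (\<delta>::real) (\<sigma>::real).
        1 \<le> n' \<longrightarrow> 0 < \<delta> \<longrightarrow> \<delta> < 1 \<longrightarrow> 0 \<le> \<sigma> \<longrightarrow>
        \<sigma> * B * sqrt (real n' powr (2 * \<beta>) * real p / (real n' * \<delta>))
          \<le> C * \<sigma> * real n' powr (\<beta> - 1/2) * sqrt (1 / \<delta>)))"
proof -
  interpret regression_design M N Q n Y Eta t \<psi> \<phi> q p x B
  proof -
    interpret prob_space M by (rule M)
    show "regression_design M N Q n Y Eta t \<psi> \<phi> q p x B"
      by (unfold_locales; fact assms)+
  qed
  show ?thesis
    using expectation_loss_eta_eq_Lhat subgaussian_uniform_deviation_bound variance_uniform_deviation_bound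
      subgaussian_rate_le[OF B_nonneg p] variance_rate_le[OF B_nonneg p] by blast
qed

end
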